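(* Suppose $U_1,\dots,U_N,V_1,\dots,V_n\in\mathbb{R}^d$ form a margin-$m$, relative-bias-$0$ embedding of $S_{n,k}$ with $0<m<1$. Then for every $T\subset[n]$ with $\max\bigl\{1,\,k-\frac{2m(n-k)}{1-m}\bigr\}\le|T|\le k$ there exist $h\in\mathbb{S}^{d-1}$ and $c\in\mathbb{R}$ such that $\langle h,V_i\rangle\ge c$ for all $i\in T$ and $\langle h,V_j\rangle\le c$ for all $j\notin T$.
   Context: $S_{n,k}\in\{0,1\}^{\binom{n}{k}\times n}$ (so $N=\binom nk$) is the matrix whose rows are all the distinct vectors in $\{0,1\}^n$ with exactly $k$ ones, each appearing exactly once. For $A\in\{0,1\}^{N\times n}$ and $m\ge0$, unit vectors $U_1,\dots,U_N,V_1,\dots,V_n\in\mathbb{R}^d$ form a margin-$m$, relative-bias-$0$ embedding of $A$ if $\langle U_j,V_i\rangle\ge m$ whenever $A_{ji}=1$ and $\langle U_j,V_i\rangle\le -m$ whenever $A_{ji}=0$. *)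

theory Defs
  imports "HOL-Analysis.Analysis"
begin

text \<open>A 0/1 matrix with rows indexed by a row set R and columns indexed by {..<n}
  is given as a predicate A :: 'r => nat => bool (A r i means entry (r,i) equals 1).\<close>

definition margin_embedding ::
  "'r set \<Rightarrow> nat \<Rightarrow> ('r \<Rightarrow> nat \<Rightarrow> bool) \<Rightarrow> ('r \<Rightarrow> 'a::euclidean_space) \<Rightarrow> (nat \<Rightarrow> 'a) \<Rightarrow> real \<Rightarrow> bool"
  where "margin_embedding R n A U V m \<longleftrightarrow>
     (\<forall>r\<in>R. norm (U r) = 1) \<and> (\<forall>i<n. norm (V i) = 1) \<and>
     (\<forall>r\<in>R. \<forall>i<n. (A r i \<longrightarrow> U r \<bullet> V i \<ge> m) \<and> (\<not> A r i \<longrightarrow> U r \<bullet> V i \<le> - m))"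

text \<open>The matrix S_{n,k}: its rows are exactly the distinct 0/1 vectors of length n with
  exactly k ones, i.e. (indexing each row by its support) the k-subsets of {..<n}.\<close>

definition Snk_rows :: "nat \<Rightarrow> nat \<Rightarrow> nat set set"
  where "Snk_rows n k = {S. S \<subseteq> {..<n} \<and> card S = k}"

definition Snk :: "nat set \<Rightarrow> nat \<Rightarrow> bool"
  where "Snk S i \<longleftrightarrow> i \<in> S"

end

theory Submission
  imports Defs
begin

text \<open>Let \<open>F\<close> be the family of \<open>k\<close>-subsets of \<open>[n]\<close> containing \<open>T\<close> and \<open>h = \<Sum>S\<in>F. U S\<close>.
  For \<open>i \<in> T\<close> every term of \<open>h \<bullet> V i\<close> is at least \<open>m\<close>. For \<open>j \<notin> T\<close> the family splits into the
  sets containing \<open>j\<close>, whose terms are at most \<open>1\<close>, and those avoiding \<open>j\<close>, whose terms are at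
  most \<open>-m\<close>; the two parts have sizes in ratio \<open>(k - |T|) : (n - k)\<close>, and the lower bound on
  \<open>|T|\<close> is exactly what makes \<open>h \<bullet> V j \<le> m |F|\<close>. Normalising \<open>h\<close> gives the separating
  hyperplane.\<close>

definition k_supersets :: "'a set \<Rightarrow> nat \<Rightarrow> 'a set \<Rightarrow> 'a set set"
  where "k_supersets X k B = {S. S \<subseteq> X \<and> card S = k \<and> B \<subseteq> S}"

lemma finite_k_supersets: "finite X \<Longrightarrow> finite (k_supersets X k B)"
  unfolding k_supersets_def by (rule finite_subset[of _ "Pow X"]) auto

lemma card_k_supersets:
  assumes "finite X" "B \<subseteq> X"
  shows "card (k_supersets X k B) =
    (if card B \<le> k then (card X - card B) choose (k - card B) else 0)"
proof (cases "card B \<le> k")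
  case False
  have "card B \<le> card S" if "S \<in> k_supersets X k B" for S
    using that assms card_mono finite_subset unfolding k_supersets_def by (metis mem_Collect_eq)
  then have "k_supersets X k B = {}"
    using False unfolding k_supersets_def by auto
  then show ?thesis using False by simp
next
  case True
  have fB: "finite B" using assms finite_subset by blast
  have img: "k_supersets X k B = (\<lambda>A. A \<union> B) ` {A. A \<subseteq> X - B \<and> card A = k - card B}"
  proof (intro set_eqI iffI)
    fix S assume S: "S \<in> k_supersets X k B"
    then have "card (S - B) = k - card B" and "S = (S - B) \<union> B"
      using card_Diff_subset[OF fB] unfolding k_supersets_def by auto
    then show "S \<in> (\<lambda>A. A \<union> B) ` {A. A \<subseteq> X - B \<and> card A = k - card B}"
      using S unfolding k_supersets_def by blast
  next
    fix S assume "S \<in> (\<lambda>A. A \<union> B) ` {A. A \<subseteq> X - B \<and> card A = k - card B}"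
    then obtain A where A: "A \<subseteq> X - B" "card A = k - card B" "S = A \<union> B" by blast
    then have "card S = card A + card B"
      using assms(1) fB finite_subset card_Un_disjoint by blast
    then show "S \<in> k_supersets X k B" using A True assms(2) unfolding k_supersets_def by auto
  qed
  have "inj_on (\<lambda>A. A \<union> B) {A. A \<subseteq> X - B \<and> card A = k - card B}"
    by (rule inj_onI) blast
  then have "card (k_supersets X k B) = card {A. A \<subseteq> X - B \<and> card A = k - card B}"
    unfolding img by (rule card_image)
  also have "\<dots> = card (X - B) choose (k - card B)"
    using assms(1) by (simp add: n_subsets)
  also have "card (X - B) = card X - card B"
    using fB assms(2) by (rule card_Diff_subset)
  finally show ?thesis using True by simp
qed

lemma card_k_supersets_pos:
  assumes "finite X" "B \<subseteq> X" "card B \<le> k" "k \<le> card X"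
  shows "0 < card (k_supersets X k B)"
  using assms by (simp add: card_k_supersets)

lemma choose_Suc_mult: "(a choose Suc b) * Suc b = (a choose b) * (a - b)"
  using binomial_absorption[of b a] binomial_absorb_comp[of a b] by (simp add: mult.commute)

lemma card_k_supersets_ratio:
  assumes "finite X" "B \<subseteq> X" "j \<in> X - B" "card B < k"
  shows "card (k_supersets (X - {j}) k B) * (k - card B) =
    card (k_supersets X k (insert j B)) * (card X - k)"
proof -
  have "finite B" using assms finite_subset by blast
  then have card_insert: "card (insert j B) = Suc (card B)" and "card B < card X"
    using assms by (auto intro: psubset_card_mono)
  define a where "a = card X - 1 - card B"
  define b where "b = k - Suc (card B)"
  have Suc_b: "Suc b = k - card B" and "a - b = card X - k"
    using assms \<open>card B < card X\<close> unfolding a_def b_def by auto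
  have "card (k_supersets (X - {j}) k B) = a choose Suc b"
    unfolding Suc_b using card_k_supersets[of "X - {j}" B k] assms unfolding a_def by auto
  moreover have "card (k_supersets X k (insert j B)) = a choose b"
    using card_k_supersets[of X "insert j B" k] assms card_insert unfolding a_def b_def by auto
  ultimately show ?thesis using choose_Suc_mult[of a b] Suc_b \<open>a - b = card X - k\<close> by simp
qed

lemma card_k_supersets_margin_le:
  fixes m :: real
  assumes "finite X" "B \<subseteq> X" "j \<in> X - B" "k \<le> card X" "0 \<le> m"
    and margin: "(real k - real (card B)) * (1 - m) \<le> 2 * m * (real (card X) - real k)"
  shows "real (card (k_supersets X k (insert j B))) * (1 - m)
    \<le> 2 * m * real (card (k_supersets (X - {j}) k B))"
    (is "?F1 * (1 - m) \<le> 2 * m * ?F0")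
proof (cases "card B < k")
  case False
  have "finite B" using assms finite_subset by blast
  then have "card (insert j B) > k" using assms False by simp
  then show ?thesis using assms by (simp add: card_k_supersets)
next
  case True
  have ratio: "?F0 * (real k - real (card B)) = ?F1 * (real (card X) - real k)"
    using card_k_supersets_ratio[OF assms(1-3) True] assms(4) True
    by (metis of_nat_diff of_nat_mult less_imp_le)
  have "?F1 * (1 - m) * (real k - real (card B)) \<le> ?F1 * (2 * m * (real (card X) - real k))"
    using mult_left_mono[OF margin, of ?F1] by (simp add: mult_ac)
  also have "\<dots> = 2 * m * (?F1 * (real (card X) - real k))"
    by (simp only: mult_ac)
  also have "\<dots> = 2 * m * ?F0 * (real k - real (card B))"
    by (simp only: ratio[symmetric] mult.assoc)
  finally show ?thesis using True by simp
qed

lemma unit_separator_of_separator: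
  fixes h :: "'a::real_inner"
  assumes "h \<noteq> 0" "\<forall>i\<in>I. c \<le> h \<bullet> v i" "\<forall>j\<in>J. h \<bullet> v j \<le> c"
  shows "\<exists>h c. norm h = 1 \<and> (\<forall>i\<in>I. c \<le> h \<bullet> v i) \<and> (\<forall>j\<in>J. h \<bullet> v j \<le> c)"
proof (intro exI conjI)
  have "0 < norm h" using assms by simp
  have sgn_inner: "sgn h \<bullet> x = (h \<bullet> x) / norm h" for x
    by (simp add: sgn_div_norm divide_inverse mult.commute)
  show "\<forall>i\<in>I. c / norm h \<le> sgn h \<bullet> v i" "\<forall>j\<in>J. sgn h \<bullet> v j \<le> c / norm h"
    using assms \<open>0 < norm h\<close> by (auto simp: sgn_inner divide_right_mono)
  show "norm (sgn h) = 1" using assms by (simp add: norm_sgn)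
qed

lemma Snk_embedding_inner:
  assumes "margin_embedding (Snk_rows n k) n Snk U V m" "S \<subseteq> {..<n}" "card S = k" "i < n"
  shows "i \<in> S \<Longrightarrow> m \<le> U S \<bullet> V i" and "i \<notin> S \<Longrightarrow> U S \<bullet> V i \<le> - m"
    and "U S \<bullet> V i \<le> 1"
proof -
  have S: "S \<in> Snk_rows n k" using assms unfolding Snk_rows_def by blast
  then show "i \<in> S \<Longrightarrow> m \<le> U S \<bullet> V i" and "i \<notin> S \<Longrightarrow> U S \<bullet> V i \<le> - m"
    using assms unfolding margin_embedding_def Snk_def by blast+
  have "norm (U S) = 1" "norm (V i) = 1" using S assms unfolding margin_embedding_def by blast+
  then show "U S \<bullet> V i \<le> 1" using norm_cauchy_schwarz[of "U S" "V i"] by simp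
qed

lemma sum_k_supersets_inner_mem:
  assumes "margin_embedding (Snk_rows n k) n Snk U V m" "T \<subseteq> {..<n}" "i \<in> T"
  shows "m * real (card (k_supersets {..<n} k T)) \<le> (\<Sum>S\<in>k_supersets {..<n} k T. U S) \<bullet> V i"
proof -
  have "m \<le> U S \<bullet> V i" if "S \<in> k_supersets {..<n} k T" for S
  proof -
    have "S \<subseteq> {..<n}" "card S = k" "i \<in> S" using that assms(3) unfolding k_supersets_def by auto
    then show ?thesis using Snk_embedding_inner(1)[OF assms(1)] by blast
  qed
  then have "(\<Sum>S\<in>k_supersets {..<n} k T. m) \<le> (\<Sum>S\<in>k_supersets {..<n} k T. U S \<bullet> V i)"
    by (rule sum_mono)
  then show ?thesis by (simp add: inner_sum_left mult.commute)
qed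

lemma sum_k_supersets_inner_nonmem:
  assumes emb: "margin_embedding (Snk_rows n k) n Snk U V m"
    and "T \<subseteq> {..<n}" "k \<le> n" "0 \<le> m"
    and margin: "(real k - real (card T)) * (1 - m) \<le> 2 * m * (real n - real k)"
    and j: "j \<in> {..<n} - T"
  shows "(\<Sum>S\<in>k_supersets {..<n} k T. U S) \<bullet> V j \<le> m * real (card (k_supersets {..<n} k T))"
proof -
  define F1 where "F1 = k_supersets {..<n} k (insert j T)"
  define F0 where "F0 = k_supersets ({..<n} - {j}) k T"
  have split: "k_supersets {..<n} k T = F1 \<union> F0" "F1 \<inter> F0 = {}"
    using j unfolding F1_def F0_def k_supersets_def by blast+
  have fin: "finite F1" "finite F0" unfolding F1_def F0_def by (simp_all add: finite_k_supersets)
  have "(\<Sum>S\<in>F1 \<union> F0. U S) \<bullet> V j = (\<Sum>S\<in>F1. U S \<bullet> V j) + (\<Sum>S\<in>F0. U S \<bullet> V j)"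
    using fin split by (simp add: inner_sum_left inner_add_left sum.union_disjoint)
  also have "\<dots> \<le> (\<Sum>S\<in>F1. 1) + (\<Sum>S\<in>F0. - m)"
  proof (intro add_mono sum_mono)
    fix S assume "S \<in> F1"
    then show "U S \<bullet> V j \<le> 1"
      using j Snk_embedding_inner(3)[OF emb] unfolding F1_def k_supersets_def by auto
  next
    fix S assume "S \<in> F0"
    then have "S \<subseteq> {..<n}" "card S = k" "j \<notin> S" unfolding F0_def k_supersets_def by auto
    then show "U S \<bullet> V j \<le> - m" using j Snk_embedding_inner(2)[OF emb] by blast
  qed
  also have "\<dots> \<le> m * real (card (F1 \<union> F0))"
    using card_k_supersets_margin_le[of "{..<n}" T j k m] assms fin split
    by (simp add: F1_def F0_def card_Un_disjoint algebra_simps)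
  finally show ?thesis using split by simp
qed

theorem propositionG2:
  fixes n k :: nat and m :: real
    and U :: "nat set \<Rightarrow> 'a::euclidean_space" and V :: "nat \<Rightarrow> 'a"
  assumes emb: "margin_embedding (Snk_rows n k) n Snk U V m"
    and m_pos: "0 < m" and m_lt1: "m < 1"
    and T_sub: "T \<subseteq> {..<n}"
    and T_lo: "max 1 (real k - 2 * m * (real n - real k) / (1 - m)) \<le> real (card T)"
    and T_hi: "card T \<le> k"
  shows "\<exists>h c. norm h = 1 \<and> (\<forall>i\<in>T. h \<bullet> V i \<ge> c) \<and> (\<forall>j\<in>{..<n} - T. h \<bullet> V j \<le> c)"
proof -
  define F where "F = k_supersets {..<n} k T"
  have margin: "(real k - real (card T)) * (1 - m) \<le> 2 * m * (real n - real k)"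
    using T_lo m_lt1 by (simp add: field_simps)
  have "k \<le> n"
  proof (rule ccontr)
    assume "\<not> k \<le> n"
    then have "2 * m * (real n - real k) < 0" using m_pos by (simp add: mult_pos_neg)
    moreover have "0 \<le> (real k - real (card T)) * (1 - m)" using T_hi m_lt1 by simp
    ultimately show False using margin by linarith
  qed
  then have "0 < card F"
    unfolding F_def using card_k_supersets_pos[OF _ T_sub] T_hi by simp
  define h where "h = (\<Sum>S\<in>F. U S)"
  have lower: "\<forall>i\<in>T. m * real (card F) \<le> h \<bullet> V i"
    unfolding h_def F_def using sum_k_supersets_inner_mem[OF emb T_sub] by blast
  have upper: "\<forall>j\<in>{..<n} - T. h \<bullet> V j \<le> m * real (card F)"
    unfolding h_def F_def using sum_k_supersets_inner_nonmem[OF emb T_sub \<open>k \<le> n\<close> _ margin] m_pos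
    by simp
  obtain i0 where "i0 \<in> T" using T_lo by fastforce
  have "0 < m * real (card F)" using m_pos \<open>0 < card F\<close> by simp
  also have "\<dots> \<le> h \<bullet> V i0" using lower \<open>i0 \<in> T\<close> by blast
  finally have "h \<noteq> 0" by auto
  then show ?thesis using unit_separator_of_separator[OF _ lower upper] by blast
qed

end
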